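(* Consider the delay differential system \[ \begin{aligned} \dot T(t)&= s-dT(t)+aT(t)\Big(1-\frac{T(t)+I(t)}{T_{\max}}\Big)-\frac{bT(t)V(t)}{1+\alpha V(t)},\\ \dot I(t)&= \frac{bT(t-\tau)V(t-\tau)}{1+\alpha V(t-\tau)}+aI(t)\Big(1-\frac{T(t)+I(t)}{T_{\max}}\Big)-\mu I(t),\\ \dot V(t)&= pI(t)-cV(t), \end{aligned} \] with positive constants $s,d,a,T_{\max},b,\alpha,\mu,p,c$ satisfying $d\le\mu$, and $\tau\ge0$. Let \[ T_0=\frac{T_{\max}}{2a}\Big(a-d+\sqrt{(a-d)^2+\tfrac{4as}{T_{\max}}}\Big),\qquad R_0=\frac{1}{\mu}\Big[\frac{bpT_0}{c}+a\Big(1-\frac{T_0}{T_{\max}}\Big)\Big]. \] If $R_0>1$, then the system is permanent.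
   Context: The system is permanent if it is dissipative (all solutions with positive initial data are ultimately bounded by a constant independent of the initial data) and uniformly persistent: there is $\eta>0$, independent of the initial data, such that every solution with positive continuous initial data on $[-\tau,0]$ satisfies $\liminf_{t\to\infty}T(t)\ge\eta$, $\liminf_{t\to\infty}I(t)\ge\eta$, $\liminf_{t\to\infty}V(t)\ge\eta$. *)

theory Defs
  imports "HOL-Analysis.Analysis" "HOL-Library.Liminf_Limsup"
begin

definition is_solution ::
  "real \<Rightarrow> real \<Rightarrow> real \<Rightarrow> real \<Rightarrow> real \<Rightarrow> real \<Rightarrow> real \<Rightarrow> real \<Rightarrow> real \<Rightarrow> real
   \<Rightarrow> (real \<Rightarrow> real) \<Rightarrow> (real \<Rightarrow> real) \<Rightarrow> (real \<Rightarrow> real) \<Rightarrow> bool" where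
  "is_solution s d a Tmax b \<alpha> \<mu> p c \<tau> T I V \<longleftrightarrow>
     continuous_on {-\<tau>..} T \<and> continuous_on {-\<tau>..} I \<and> continuous_on {-\<tau>..} V \<and>
     (\<forall>t\<in>{-\<tau>..0}. T t > 0 \<and> I t > 0 \<and> V t > 0) \<and>
     (\<forall>t\<ge>0.
        (T has_real_derivative
           (s - d * T t + a * T t * (1 - (T t + I t) / Tmax) - b * T t * V t / (1 + \<alpha> * V t)))
           (at t within {0..}) \<and>
        (I has_real_derivative
           (b * T (t - \<tau>) * V (t - \<tau>) / (1 + \<alpha> * V (t - \<tau>))
             + a * I t * (1 - (T t + I t) / Tmax) - \<mu> * I t))
           (at t within {0..}) \<and>
        (V has_real_derivative (p * I t - c * V t)) (at t within {0..}))"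

definition T0_of :: "real \<Rightarrow> real \<Rightarrow> real \<Rightarrow> real \<Rightarrow> real" where
  "T0_of s d a Tmax = Tmax / (2 * a) * (a - d + sqrt ((a - d)^2 + 4 * a * s / Tmax))"

definition R0_of :: "real \<Rightarrow> real \<Rightarrow> real \<Rightarrow> real \<Rightarrow> real \<Rightarrow> real \<Rightarrow> real \<Rightarrow> real \<Rightarrow> real" where
  "R0_of s d a Tmax b \<mu> p c =
     (1 / \<mu>) * (b * p * T0_of s d a Tmax / c + a * (1 - T0_of s d a Tmax / Tmax))"

definition permanent ::
  "real \<Rightarrow> real \<Rightarrow> real \<Rightarrow> real \<Rightarrow> real \<Rightarrow> real \<Rightarrow> real \<Rightarrow> real \<Rightarrow> real \<Rightarrow> real \<Rightarrow> bool" where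
  "permanent s d a Tmax b \<alpha> \<mu> p c \<tau> \<longleftrightarrow>
     (\<exists>M. \<forall>T I V. is_solution s d a Tmax b \<alpha> \<mu> p c \<tau> T I V \<longrightarrow>
         (\<forall>\<^sub>F t in at_top. T t \<le> M \<and> I t \<le> M \<and> V t \<le> M)) \<and>
     (\<exists>\<eta>>0. \<forall>T I V. is_solution s d a Tmax b \<alpha> \<mu> p c \<tau> T I V \<longrightarrow>
         Liminf at_top (\<lambda>t. ereal (T t)) \<ge> ereal \<eta> \<and>
         Liminf at_top (\<lambda>t. ereal (I t)) \<ge> ereal \<eta> \<and>
         Liminf at_top (\<lambda>t. ereal (V t)) \<ge> ereal \<eta>)"

end

theory Submission
  imports Defs
begin

text \<open>
  Since
  \<open>T' \<le> s + (a - d) T - a T\<^sup>2 / Tmax\<close>, whose positive root is \<open>T0\<close>, eventually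
  \<open>T \<le> T0 + 1\<close>; the logistic term then confines \<open>I\<close> and afterwards \<open>V\<close>, and while \<open>T\<close> is
  small, \<open>T' \<ge> s/2\<close>. For the infection consider
  \<open>W = I + q V + \<integral>\<^sub>t\<^sub>-\<^sub>\<tau>\<^sup>t b T V / (1 + \<alpha> V)\<close>, whose derivative no longer
  involves the delay. While \<open>W\<close> stays below a threshold, \<open>I\<close> and \<open>V\<close> are small, \<open>T\<close> is driven
  into a neighbourhood of \<open>T0\<close>, and there \<open>R0 > 1\<close> gives \<open>W' \<ge> \<kappa> W\<close>; so \<open>W\<close> reaches
  the threshold. Because \<open>W' \<ge> - kdec W\<close>, it then loses at most a fixed factor before \<open>T\<close> is
  back near \<open>T0\<close> and the growth resumes. This bounds \<open>W\<close> below uniformly, and through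
  \<open>W \<le> I + C V\<close> also \<open>V\<close> and then \<open>I\<close>.
\<close>

section \<open>Scalar differential inequalities\<close>

lemma has_real_derivative_at_if_within_atLeast:
  assumes "(f has_real_derivative y) (at t within {t0..})" "t0 < t"
  shows "(f has_real_derivative y) (at t)"
proof -
  have "(f has_real_derivative y) (at t within {t0<..})"
    using assms(1) by (rule has_field_derivative_subset) auto
  then show ?thesis using at_within_open[of t "{t0<..}"] assms(2) by simp
qed

lemma integral_upper_has_real_derivative:
  fixes g :: "real \<Rightarrow> real"
  assumes "continuous_on {t0..} g" "t0 < t"
  shows "((\<lambda>u. integral {t0..u} g) has_real_derivative g t) (at t)"
proof -
  have "continuous_on {t0..t+1} g" using assms(1) by (rule continuous_on_subset) auto
  then have "((\<lambda>u. integral {t0..u} g) has_real_derivative g t) (at t within {t0..t+1})"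
    using assms(2) by (intro integral_has_real_derivative) auto
  then have "((\<lambda>u. integral {t0..u} g) has_real_derivative g t) (at t within {t0<..<t+1})"
    by (rule has_field_derivative_subset) auto
  then show ?thesis using at_within_open[of t "{t0<..<t+1}"] assms(2) by simp
qed

lemma last_time_le:
  fixes x :: "real \<Rightarrow> real"
  assumes "continuous_on {u..w} x" "u \<le> w" "x u \<le> K"
  obtains z where "u \<le> z" "z \<le> w" "x z \<le> K" "\<And>t. z < t \<Longrightarrow> t \<le> w \<Longrightarrow> K < x t"
proof -
  define S where "S = {u..w} \<inter> x -` {..K}"
  have "closed S" unfolding S_def
    by (rule continuous_closed_preimage[OF assms(1)]) auto
  moreover have "u \<in> S" using assms by (auto simp: S_def)
  moreover have bdd: "bdd_above S" by (auto simp: S_def)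
  ultimately have Sup: "Sup S \<in> S" using closed_contains_Sup by blast
  have "K < x t" if "Sup S < t" "t \<le> w" for t
    using cSup_upper[OF _ bdd, of t] that Sup by (force simp: S_def)
  with Sup show ?thesis using that by (auto simp: S_def)
qed

lemma first_time_le:
  fixes x :: "real \<Rightarrow> real"
  assumes "continuous_on {u..w} x" "u \<le> w" "x w \<le> K"
  obtains z where "u \<le> z" "z \<le> w" "x z \<le> K" "\<And>t. u \<le> t \<Longrightarrow> t < z \<Longrightarrow> K < x t"
proof -
  define S where "S = {u..w} \<inter> x -` {..K}"
  have "closed S" unfolding S_def
    by (rule continuous_closed_preimage[OF assms(1)]) auto
  moreover have "w \<in> S" using assms by (auto simp: S_def)
  moreover have bdd: "bdd_below S" by (auto simp: S_def)
  ultimately have Inf: "Inf S \<in> S" using closed_contains_Inf by blast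
  have "K < x t" if "u \<le> t" "t < Inf S" for t
    using cInf_lower[OF _ bdd, of t] that Inf by (force simp: S_def)
  with Inf show ?thesis using that by (auto simp: S_def)
qed

lemma exp_lower_bound_if_deriv_ge:
  fixes x :: "real \<Rightarrow> real"
  assumes "u \<le> v" "continuous_on {u..v} x"
    and "\<And>t. u < t \<Longrightarrow> t < v \<Longrightarrow> (x has_real_derivative x' t) (at t)"
    and "\<And>t. u < t \<Longrightarrow> t < v \<Longrightarrow> x' t \<ge> r * x t"
  shows "x v \<ge> x u * exp (r * (v - u))"
proof -
  let ?y = "\<lambda>t. x t * exp (- r * t)"
  have "?y u \<le> ?y v"
  proof (rule DERIV_nonneg_imp_increasing_open[OF assms(1)])
    fix t assume t: "u < t" "t < v"
    have "(?y has_real_derivative (x' t * exp (- r * t) + x t * (exp (- r * t) * (- r * 1))))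
        (at t)"
      using assms(3)[OF t] by (auto intro!: derivative_eq_intros)
    moreover have "x' t * exp (- r * t) + x t * (exp (- r * t) * (- r * 1))
        = exp (- r * t) * (x' t - r * x t)"
      by (simp add: algebra_simps)
    moreover have "exp (- r * t) * (x' t - r * x t) \<ge> 0"
      using assms(4)[OF t] by simp
    ultimately show "\<exists>y. (?y has_real_derivative y) (at t) \<and> 0 \<le> y" by auto
  qed (intro continuous_intros assms(2))
  then have "x u * exp (- r * u) * exp (r * v) \<le> x v * exp (- r * v) * exp (r * v)"
    by simp
  then show ?thesis
    by (simp add: mult.assoc exp_add[symmetric] algebra_simps)
qed

lemma pos_if_deriv_ge:
  fixes x :: "real \<Rightarrow> real"
  assumes "u \<le> v" "continuous_on {u..v} x"
    and "\<And>t. u < t \<Longrightarrow> t < v \<Longrightarrow> (x has_real_derivative x' t) (at t)"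
    and "\<And>t. u < t \<Longrightarrow> t < v \<Longrightarrow> x' t \<ge> r * x t"
    and "x u > 0"
  shows "x v > 0"
  using exp_lower_bound_if_deriv_ge[OF assms(1-4)] assms(5)
  by (smt (verit) exp_gt_zero mult_pos_pos)

lemma le_if_deriv_nonpos_above:
  fixes x :: "real \<Rightarrow> real"
  assumes "u \<le> w" "continuous_on {u..w} x"
    and "\<And>t. u < t \<Longrightarrow> t < w \<Longrightarrow> (x has_real_derivative x' t) (at t)"
    and "\<And>t. u < t \<Longrightarrow> t < w \<Longrightarrow> x t > K \<Longrightarrow> x' t \<le> 0"
    and "x u \<le> K"
  shows "x w \<le> K"
proof -
  obtain z where z: "u \<le> z" "z \<le> w" "x z \<le> K" and above: "\<And>t. z < t \<Longrightarrow> t \<le> w \<Longrightarrow> K < x t"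
    using last_time_le[OF assms(2,1,5)] by blast
  have "x w \<le> x z"
  proof (rule DERIV_nonpos_imp_decreasing_open[OF z(2)])
    fix t assume "z < t" "t < w"
    then show "\<exists>y. (x has_real_derivative y) (at t) \<and> y \<le> 0"
      using assms(3,4) above z by (meson less_eq_real_def order_le_less_trans)
  qed (rule continuous_on_subset[OF assms(2)], use z in auto)
  with z show ?thesis by simp
qed

lemma le_after_if_deriv_le_neg_above:
  fixes x :: "real \<Rightarrow> real"
  assumes "u \<le> w" "continuous_on {u..w} x"
    and "\<And>t. u < t \<Longrightarrow> t < w \<Longrightarrow> (x has_real_derivative x' t) (at t)"
    and "\<And>t. u < t \<Longrightarrow> t < w \<Longrightarrow> x t \<ge> K \<Longrightarrow> x' t \<le> - \<delta>"
    and "\<delta> > 0" "x u \<le> B" "u + (B - K) / \<delta> \<le> w"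
  shows "x w \<le> K"
proof (cases "\<exists>r\<in>{u..w}. x r \<le> K")
  case True
  then obtain r where r: "u \<le> r" "r \<le> w" "x r \<le> K" by auto
  show ?thesis
  proof (rule le_if_deriv_nonpos_above[where x = x and x' = x' and u = r and w = w])
    show "continuous_on {r..w} x" using assms(2) r continuous_on_subset by fastforce
  qed (use assms(3,4,5) r in \<open>force+\<close>)
next
  case False
  then have above: "\<And>r. u \<le> r \<Longrightarrow> r \<le> w \<Longrightarrow> K < x r" by force
  have "x w + \<delta> * w \<le> x u + \<delta> * u"
  proof (rule DERIV_nonpos_imp_decreasing_open[OF assms(1)])
    fix t assume t: "u < t" "t < w"
    have "((\<lambda>t. x t + \<delta> * t) has_real_derivative x' t + \<delta>) (at t)"
      using assms(3)[OF t] by (auto intro!: derivative_eq_intros)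
    moreover have "x' t + \<delta> \<le> 0" using assms(4)[OF t] above[of t] t by auto
    ultimately show "\<exists>y. ((\<lambda>t. x t + \<delta> * t) has_real_derivative y) (at t) \<and> y \<le> 0" by blast
  qed (intro continuous_intros assms(2))
  then have "\<delta> * (w - u) \<le> B - x w" using assms(6) by (simp add: algebra_simps)
  moreover have "B - K \<le> \<delta> * (w - u)" using assms(5,7) by (simp add: field_simps)
  ultimately show ?thesis by simp
qed

lemma ge_after_if_deriv_ge_pos_below:
  fixes x :: "real \<Rightarrow> real"
  assumes "u \<le> w" "continuous_on {u..w} x"
    and "\<And>t. u < t \<Longrightarrow> t < w \<Longrightarrow> (x has_real_derivative x' t) (at t)"
    and "\<And>t. u < t \<Longrightarrow> t < w \<Longrightarrow> x t \<le> K \<Longrightarrow> x' t \<ge> \<delta>"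
    and "\<delta> > 0" "x u \<ge> B" "u + (K - B) / \<delta> \<le> w"
  shows "x w \<ge> K"
proof -
  have "- x w \<le> - K"
  proof (rule le_after_if_deriv_le_neg_above[where x' = "\<lambda>t. - x' t" and B = "- B", OF assms(1)])
    show "continuous_on {u..w} (\<lambda>t. - x t)" using assms(2) by (intro continuous_intros)
    fix t assume t: "u < t" "t < w"
    show "((\<lambda>t. - x t) has_real_derivative - x' t) (at t)"
      using assms(3)[OF t] by (rule DERIV_minus)
    show "- K \<le> - x t \<Longrightarrow> - x' t \<le> - \<delta>" using assms(4)[OF t] by auto
  qed (use assms(5-7) in auto)
  then show ?thesis by simp
qed

lemma Liminf_ereal_ge_if_eventually_ge:
  "\<forall>\<^sub>F t in F. c \<le> f t \<Longrightarrow> ereal c \<le> Liminf F (\<lambda>t. ereal (f t))"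
  by (rule Liminf_bounded) (auto elim: eventually_mono)

lemma incidence_le_mass_action:
  fixes b \<alpha> T V :: real
  assumes "b \<ge> 0" "\<alpha> \<ge> 0" "T \<ge> 0" "V \<ge> 0"
  shows "b * T * V / (1 + \<alpha> * V) \<le> b * T * V"
proof -
  have "b * T * V * 1 \<le> b * T * V * (1 + \<alpha> * V)"
    using assms by (intro mult_left_mono) auto
  then show ?thesis using assms by (simp add: divide_le_eq add_pos_nonneg)
qed

lemma incidence_le_saturation:
  fixes b \<alpha> T V :: real
  assumes "b \<ge> 0" "\<alpha> > 0" "T \<ge> 0" "V \<ge> 0"
  shows "b * T * V / (1 + \<alpha> * V) \<le> b * T / \<alpha>"
proof -
  have "b * T * V * \<alpha> \<le> b * T * (1 + \<alpha> * V)"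
    using assms by (simp add: algebra_simps)
  then show ?thesis
    using assms by (simp add: divide_le_eq le_divide_eq add_pos_nonneg algebra_simps)
qed

lemma incidence_mono:
  fixes b \<alpha> T V T' V' B :: real
  assumes "b \<ge> 0" "\<alpha> \<ge> 0" "0 \<le> T'" "T' \<le> T" "0 \<le> V'" "V' \<le> V" "V \<le> B"
  shows "b * T' * V' / (1 + \<alpha> * B) \<le> b * T * V / (1 + \<alpha> * V)"
proof (rule frac_le)
  show "b * T' * V' \<le> b * T * V" using assms by (intro mult_mono) auto
  show "0 < 1 + \<alpha> * V" using assms by (simp add: add_pos_nonneg)
  show "1 + \<alpha> * V \<le> 1 + \<alpha> * B" using assms by (simp add: mult_left_mono)
qed (use assms in simp)

lemma logistic_term_ge:
  fixes a Tmax u S B :: real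
  assumes "a > 0" "Tmax > 0" "u \<ge> 0" "S \<le> B"
  shows "a * u * (1 - S / Tmax) \<ge> - (a * B / Tmax) * u"
proof -
  have "a * u * (S / Tmax) \<le> a * u * (B / Tmax)"
    using assms by (intro mult_left_mono divide_right_mono) auto
  moreover have "a * u * (1 - S / Tmax) = a * u - a * u * (S / Tmax)"
    by (simp add: algebra_simps)
  moreover have "a * u * (B / Tmax) = (a * B / Tmax) * u" by simp
  moreover have "a * u \<ge> 0" using assms by simp
  ultimately show ?thesis by linarith
qed

lemma logistic_term_le_if_ge_capacity:
  fixes a Tmax u S :: real
  assumes "a > 0" "Tmax > 0" "S \<ge> 0" "Tmax \<le> u"
  shows "a * u * (1 - (S + u) / Tmax) \<le> a * (Tmax - u)"
proof -
  have "a * u * (1 - (S + u) / Tmax) \<le> a * u * (1 - u / Tmax)"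
    using assms by (intro mult_left_mono) (auto intro!: divide_right_mono)
  also have "\<dots> = a * (Tmax - u) * (u / Tmax)"
    using assms by (simp add: field_simps)
  also have "\<dots> \<le> a * (Tmax - u) * 1"
    using assms by (intro mult_left_mono_neg) (auto simp: mult_nonneg_nonpos)
  finally show ?thesis by simp
qed

section \<open>Positivity and dissipativity\<close>

locale hiv_model =
  fixes s d a Tmax b \<alpha> \<mu> p c \<tau> :: real
  assumes s_pos: "s > 0" and d_pos: "d > 0" and a_pos: "a > 0" and Tmax_pos: "Tmax > 0"
    and b_pos: "b > 0" and \<alpha>_pos: "\<alpha> > 0" and \<mu>_pos: "\<mu> > 0" and p_pos: "p > 0"
    and c_pos: "c > 0" and \<tau>_nonneg: "\<tau> \<ge> 0"
begin

definition "T0 = T0_of s d a Tmax"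
definition "T1 = Tmax / (2 * a) * (a - d - sqrt ((a - d)^2 + 4 * a * s / Tmax))"

definition infection_free_rhs :: "real \<Rightarrow> real" where
  "infection_free_rhs y = s + (a - d) * y - a * y^2 / Tmax"

lemma T0_pos: "T0 > 0" and T1_neg: "T1 < 0"
  and T0_times_T1: "T0 * T1 = - s * Tmax / a" and T0_plus_T1: "T0 + T1 = Tmax * (a - d) / a"
proof -
  define q where "q = sqrt ((a - d)^2 + 4 * a * s / Tmax)"
  have q2: "q^2 = (a - d)^2 + 4 * a * s / Tmax"
    unfolding q_def using a_pos s_pos Tmax_pos by simp
  have "sqrt ((a - d)^2) < q"
    unfolding q_def using a_pos s_pos Tmax_pos by (simp only: real_sqrt_less_iff) simp
  then have q: "a - d + q > 0" "a - d - q < 0" by auto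
  define k where "k = Tmax / (2 * a)"
  have k: "k > 0" using a_pos Tmax_pos by (simp add: k_def)
  have t0: "T0 = k * (a - d + q)" by (simp add: T0_def T0_of_def q_def k_def)
  have t1: "T1 = k * (a - d - q)" by (simp add: T1_def q_def k_def)
  show "T0 > 0" using t0 q k by simp
  show "T1 < 0" using t1 q k by (simp add: mult_pos_neg)
  have "T0 * T1 = k^2 * ((a - d)^2 - q^2)"
    unfolding t0 t1 by (simp add: algebra_simps power2_eq_square)
  also have "\<dots> = - s * Tmax / a"
    unfolding q2 k_def using a_pos Tmax_pos by (simp add: power2_eq_square field_simps)
  finally show "T0 * T1 = - s * Tmax / a" .
  show "T0 + T1 = Tmax * (a - d) / a" unfolding t0 t1 k_def using a_pos by (simp add: field_simps)
qed

lemma infection_free_rhs_factor: "infection_free_rhs y = (a / Tmax) * ((T0 - y) * (y - T1))"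
proof -
  have "(a / Tmax) * ((T0 - y) * (y - T1)) = - (a / Tmax) * (y^2 - (T0 + T1) * y + T0 * T1)"
    by (simp add: algebra_simps power2_eq_square)
  also have "\<dots> = infection_free_rhs y"
    unfolding T0_plus_T1 T0_times_T1 infection_free_rhs_def using a_pos Tmax_pos
    by (simp add: field_simps power2_eq_square)
  finally show ?thesis by simp
qed

lemma infection_free_rhs_le:
  assumes "x \<ge> 0" "y \<ge> T0 + x"
  shows "infection_free_rhs y \<le> - (a / Tmax) * x * T0"
proof -
  have "x * T0 \<le> (y - T0) * (y - T1)"
    using T0_pos T1_neg assms by (intro mult_mono) auto
  then have "(a / Tmax) * (x * T0) \<le> (a / Tmax) * ((y - T0) * (y - T1))"
    using a_pos Tmax_pos by (intro mult_left_mono) auto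
  then show ?thesis unfolding infection_free_rhs_factor by (simp add: algebra_simps)
qed

lemma infection_free_rhs_ge:
  assumes "x \<ge> 0" "0 \<le> y" "y \<le> T0 - x"
  shows "infection_free_rhs y \<ge> x * s / T0"
proof -
  have "x * (- T1) \<le> (T0 - y) * (y - T1)"
    using T0_pos T1_neg assms by (intro mult_mono) auto
  then have "(a / Tmax) * (x * (- T1)) \<le> infection_free_rhs y"
    unfolding infection_free_rhs_factor using a_pos Tmax_pos by (intro mult_left_mono) auto
  moreover have "- T1 = s * Tmax / (a * T0)"
    using T0_pos T0_times_T1 a_pos by (simp add: field_simps)
  ultimately show ?thesis using a_pos Tmax_pos T0_pos by (simp add: field_simps)
qed

definition "MT = T0 + 1"
definition "KI = Tmax + (b * MT / \<alpha> + 1) / a"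
definition "KV = (p * KI + 1) / c"
definition "M = max MT (max KI KV)"

lemma M_ge: "MT \<le> M" "KI \<le> M" "KV \<le> M" and M_pos: "M > 0"
  using T0_pos by (auto simp: M_def MT_def)

definition "\<eta>T = s / (2 * (d + 2 * a * M / Tmax + b / \<alpha>))"

lemma \<eta>T_pos: "\<eta>T > 0"
  using s_pos d_pos a_pos M_pos Tmax_pos b_pos \<alpha>_pos by (simp add: \<eta>T_def add_pos_nonneg)

end

locale hiv_solution = hiv_model +
  fixes T I V :: "real \<Rightarrow> real"
  assumes solution: "is_solution s d a Tmax b \<alpha> \<mu> p c \<tau> T I V"
begin

definition "incidence t = b * T t * V t / (1 + \<alpha> * V t)"
definition "DT t = s - d * T t + a * T t * (1 - (T t + I t) / Tmax) - incidence t"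
definition "DI t = incidence (t - \<tau>) + a * I t * (1 - (T t + I t) / Tmax) - \<mu> * I t"
definition "DV t = p * I t - c * V t"

lemma T_deriv: "t > 0 \<Longrightarrow> (T has_real_derivative DT t) (at t)"
  and I_deriv: "t > 0 \<Longrightarrow> (I has_real_derivative DI t) (at t)"
  and V_deriv: "t > 0 \<Longrightarrow> (V has_real_derivative DV t) (at t)"
  using solution
  by (auto simp: is_solution_def DT_def DI_def DV_def incidence_def
      intro!: has_real_derivative_at_if_within_atLeast)

lemma solution_continuous_on:
  assumes "-\<tau> \<le> u"
  shows "continuous_on {u..v} T" "continuous_on {u..v} I" "continuous_on {u..v} V"
  using solution assms continuous_on_subset[of "{-\<tau>..}" _ "{u..v}"]
  by (auto simp: is_solution_def)

lemma initial_pos: "-\<tau> \<le> t \<Longrightarrow> t \<le> 0 \<Longrightarrow> T t > 0 \<and> I t > 0 \<and> V t > 0"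
  using solution by (auto simp: is_solution_def)

lemma solution_bounded_on:
  obtains B where "\<And>t. 0 \<le> t \<Longrightarrow> t \<le> z \<Longrightarrow> T t \<le> B \<and> I t \<le> B \<and> V t \<le> B"
proof -
  have "compact ((\<lambda>t. max (T t) (max (I t) (V t))) ` {0..z})"
    using solution_continuous_on[of 0 z] \<tau>_nonneg
    by (intro compact_continuous_image continuous_intros) auto
  then obtain B where "\<forall>t\<in>{0..z}. max (T t) (max (I t) (V t)) \<le> B"
    using compact_imp_bounded bounded_real by (metis (no_types, lifting) abs_le_D1 image_eqI)
  then show ?thesis by (intro that) auto
qed

lemma pos_at_if_pos_before:
  assumes "0 < z" and before: "\<And>t. -\<tau> \<le> t \<Longrightarrow> t < z \<Longrightarrow> T t > 0 \<and> I t > 0 \<and> V t > 0"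
  shows "T z > 0 \<and> I z > 0 \<and> V z > 0"
proof -
  have cont: "continuous_on {0..z} T" "continuous_on {0..z} I" "continuous_on {0..z} V"
    using solution_continuous_on[of 0 z] \<tau>_nonneg by auto
  obtain B where bound: "\<And>t. 0 \<le> t \<Longrightarrow> t \<le> z \<Longrightarrow> T t \<le> B \<and> I t \<le> B \<and> V t \<le> B"
    using solution_bounded_on by blast
  have pos: "T t > 0" "I t > 0" "V t > 0" if "0 < t" "t < z" for t
    using before[of t] that \<tau>_nonneg by auto
  have "T z > 0"
  proof (rule pos_if_deriv_ge[where x = T and x' = DT and u = 0 and v = z
        and r = "- (d + a * (2 * B) / Tmax + b * B)"])
    fix t assume t: "0 < t" "t < z"
    show "(T has_real_derivative DT t) (at t)" using T_deriv t by simp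
    have "incidence t \<le> b * T t * V t"
      unfolding incidence_def using pos[OF t] b_pos \<alpha>_pos by (intro incidence_le_mass_action) auto
    also have "\<dots> \<le> b * B * T t"
      using pos[OF t] bound[of t] t b_pos by (simp add: mult.commute mult_left_mono)
    finally have "incidence t \<le> b * B * T t" .
    moreover have "a * T t * (1 - (T t + I t) / Tmax) \<ge> - (a * (2 * B) / Tmax) * T t"
      using pos[OF t] bound[of t] t a_pos Tmax_pos by (intro logistic_term_ge) auto
    ultimately show "DT t \<ge> - (d + a * (2 * B) / Tmax + b * B) * T t"
      unfolding DT_def using s_pos by (simp add: algebra_simps)
  qed (use \<open>0 < z\<close> cont initial_pos[of 0] \<tau>_nonneg in auto)
  moreover have "I z > 0"
  proof (rule pos_if_deriv_ge[where x = I and x' = DI and u = 0 and v = z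
        and r = "- (\<mu> + a * (2 * B) / Tmax)"])
    fix t assume t: "0 < t" "t < z"
    show "(I has_real_derivative DI t) (at t)" using I_deriv t by simp
    have "incidence (t - \<tau>) \<ge> 0"
      unfolding incidence_def using before[of "t - \<tau>"] t \<tau>_nonneg b_pos \<alpha>_pos
      by (simp add: add_pos_pos)
    moreover have "a * I t * (1 - (T t + I t) / Tmax) \<ge> - (a * (2 * B) / Tmax) * I t"
      using pos[OF t] bound[of t] t a_pos Tmax_pos by (intro logistic_term_ge) auto
    ultimately show "DI t \<ge> - (\<mu> + a * (2 * B) / Tmax) * I t"
      unfolding DI_def by (simp add: algebra_simps)
  qed (use \<open>0 < z\<close> cont initial_pos[of 0] \<tau>_nonneg in auto)
  moreover have "V z > 0"
  proof (rule pos_if_deriv_ge[where x = V and x' = DV and u = 0 and v = z and r = "- c"])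
    fix t assume t: "0 < t" "t < z"
    show "(V has_real_derivative DV t) (at t)" using V_deriv t by simp
    show "DV t \<ge> - c * V t" using pos[OF t] p_pos by (simp add: DV_def)
  qed (use \<open>0 < z\<close> cont initial_pos[of 0] \<tau>_nonneg in auto)
  ultimately show ?thesis by blast
qed

lemma solution_pos:
  assumes "-\<tau> \<le> t1"
  shows "T t1 > 0 \<and> I t1 > 0 \<and> V t1 > 0"
proof (rule ccontr)
  assume not_pos: "\<not> ?thesis"
  then have "t1 > 0" using initial_pos assms by force
  let ?m = "\<lambda>t. min (T t) (min (I t) (V t))"
  have "continuous_on {0..t1} ?m"
    using solution_continuous_on[of 0 t1] \<tau>_nonneg by (intro continuous_intros) auto
  moreover have "?m t1 \<le> 0" using not_pos by (auto simp: min_le_iff_disj)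
  ultimately obtain z where z: "0 \<le> z" "z \<le> t1" "?m z \<le> 0"
    and before: "\<And>t. 0 \<le> t \<Longrightarrow> t < z \<Longrightarrow> 0 < ?m t"
    using first_time_le[of 0 t1 ?m 0] \<open>t1 > 0\<close> by auto
  have "z > 0" using z initial_pos[of 0] \<tau>_nonneg by (cases "z = 0") auto
  have "T z > 0 \<and> I z > 0 \<and> V z > 0"
  proof (rule pos_at_if_pos_before[OF \<open>z > 0\<close>])
    fix t assume "-\<tau> \<le> t" "t < z"
    then show "T t > 0 \<and> I t > 0 \<and> V t > 0"
      using before[of t] initial_pos[of t] by (cases "t \<le> 0") auto
  qed
  with z show False by (auto simp: min_le_iff_disj)
qed

lemma incidence_bounds:
  assumes "-\<tau> \<le> t"
  shows "0 \<le> incidence t" "incidence t \<le> b * T t / \<alpha>" "incidence t \<le> b * T t * V t"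
  using solution_pos[OF assms] b_pos \<alpha>_pos unfolding incidence_def
  by (auto intro: incidence_le_saturation incidence_le_mass_action simp: add_pos_pos)

lemma logistic_term_ge_absorbed:
  assumes "u \<ge> 0" "T t \<le> M" "I t \<le> M"
  shows "a * u * (1 - (T t + I t) / Tmax) \<ge> - (2 * a * M / Tmax) * u"
  using logistic_term_ge[of a Tmax u "T t + I t" "2 * M"] assms a_pos Tmax_pos
  by (simp add: ac_simps)

lemma DT_eq: "DT t = infection_free_rhs (T t) - a * T t * I t / Tmax - incidence t"
  unfolding DT_def infection_free_rhs_def
  by (simp add: algebra_simps power2_eq_square add_divide_distrib diff_divide_distrib)

lemma DT_le:
  assumes "0 \<le> t"
  shows "DT t \<le> infection_free_rhs (T t)"
proof -
  have "a * T t * I t / Tmax \<ge> 0"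
    using solution_pos[of t] assms \<tau>_nonneg a_pos Tmax_pos by simp
  then show ?thesis unfolding DT_eq using incidence_bounds(1)[of t] assms \<tau>_nonneg by simp
qed

lemma T_eventually_le: "\<forall>\<^sub>F t in at_top. T t \<le> MT"
proof -
  define \<delta> where "\<delta> = a * T0 / Tmax"
  have "\<delta> > 0" using a_pos Tmax_pos T0_pos by (simp add: \<delta>_def)
  have "T t \<le> MT" if "1 + max 0 ((T 1 - MT) / \<delta>) \<le> t" for t
  proof (rule le_after_if_deriv_le_neg_above[where x = T and x' = DT and u = 1 and w = t
        and \<delta> = \<delta> and B = "T 1"])
    fix r assume r: "1 < r" "r < t"
    show "(T has_real_derivative DT r) (at r)" using T_deriv r by simp
    assume "MT \<le> T r"
    then have "infection_free_rhs (T r) \<le> - (a / Tmax) * 1 * T0"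
      by (intro infection_free_rhs_le) (auto simp: MT_def)
    then show "DT r \<le> - \<delta>" using DT_le[of r] r by (simp add: \<delta>_def)
  qed (use that \<open>\<delta> > 0\<close> solution_continuous_on[of 1 t] \<tau>_nonneg in auto)
  then show ?thesis unfolding eventually_at_top_linorder by blast
qed

lemma I_eventually_le: "\<forall>\<^sub>F t in at_top. I t \<le> KI"
proof -
  obtain tT where tT: "\<And>t. t \<ge> tT \<Longrightarrow> T t \<le> MT"
    using T_eventually_le unfolding eventually_at_top_linorder by blast
  define u where "u = max 1 tT + \<tau>"
  have "u \<ge> 1" using \<tau>_nonneg by (simp add: u_def)
  have "I t \<le> KI" if "u + max 0 (I u - KI) \<le> t" for t
  proof (rule le_after_if_deriv_le_neg_above[where x = I and x' = DI and u = u and w = t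
        and \<delta> = 1 and B = "I u"])
    fix r assume r: "u < r" "r < t"
    show "(I has_real_derivative DI r) (at r)" using I_deriv r \<open>u \<ge> 1\<close> by simp
    assume "KI \<le> I r"
    have "Tmax \<le> KI" using T0_pos b_pos \<alpha>_pos a_pos by (simp add: KI_def MT_def)
    have "incidence (r - \<tau>) \<le> b * T (r - \<tau>) / \<alpha>"
      using incidence_bounds(2)[of "r - \<tau>"] r \<open>u \<ge> 1\<close> by simp
    also have "\<dots> \<le> b * MT / \<alpha>"
      using tT[of "r - \<tau>"] r b_pos \<alpha>_pos by (simp add: u_def divide_right_mono)
    finally have "incidence (r - \<tau>) \<le> b * MT / \<alpha>" .
    moreover have "a * I r * (1 - (T r + I r) / Tmax) \<le> a * (Tmax - I r)"
      using logistic_term_le_if_ge_capacity[of a Tmax "T r" "I r"] solution_pos[of r] r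
        \<open>u \<ge> 1\<close> \<tau>_nonneg \<open>KI \<le> I r\<close> \<open>Tmax \<le> KI\<close> a_pos Tmax_pos
      by simp
    moreover have "a * (Tmax - I r) \<le> a * (Tmax - KI)"
      using \<open>KI \<le> I r\<close> a_pos by simp
    moreover have "a * (Tmax - KI) = - (b * MT / \<alpha> + 1)"
      using a_pos by (simp add: KI_def field_simps)
    moreover have "\<mu> * I r \<ge> 0" using solution_pos[of r] r \<open>u \<ge> 1\<close> \<tau>_nonneg \<mu>_pos by simp
    ultimately show "DI r \<le> - 1" unfolding DI_def by linarith
  qed (use that solution_continuous_on[of u t] \<open>u \<ge> 1\<close> \<tau>_nonneg in auto)
  then show ?thesis unfolding eventually_at_top_linorder by blast
qed

lemma V_eventually_le: "\<forall>\<^sub>F t in at_top. V t \<le> KV"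
proof -
  obtain tI where tI: "\<And>t. t \<ge> tI \<Longrightarrow> I t \<le> KI"
    using I_eventually_le unfolding eventually_at_top_linorder by blast
  define u where "u = max 1 tI"
  have "V t \<le> KV" if "u + max 0 (V u - KV) \<le> t" for t
  proof (rule le_after_if_deriv_le_neg_above[where x = V and x' = DV and u = u and w = t
        and \<delta> = 1 and B = "V u"])
    fix r assume r: "u < r" "r < t"
    show "(V has_real_derivative DV r) (at r)" using V_deriv r by (simp add: u_def)
    assume "KV \<le> V r"
    then have "c * V r \<ge> p * KI + 1" using c_pos by (simp add: KV_def field_simps)
    moreover have "p * I r \<le> p * KI" using tI[of r] r p_pos by (simp add: u_def)
    ultimately show "DV r \<le> - 1" by (simp add: DV_def)
  qed (use that solution_continuous_on[of u t] \<tau>_nonneg in \<open>auto simp: u_def\<close>)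
  then show ?thesis unfolding eventually_at_top_linorder by blast
qed

lemma eventually_bounded: "\<forall>\<^sub>F t in at_top. T t \<le> M \<and> I t \<le> M \<and> V t \<le> M"
  using eventually_conj[OF T_eventually_le eventually_conj[OF I_eventually_le V_eventually_le]]
  by eventually_elim (use M_ge in auto)

text \<open>The bounds start at \<open>ta - \<tau>\<close> so that they also cover the delayed arguments.\<close>
definition "absorbed ta \<longleftrightarrow> 1 + \<tau> \<le> ta \<and> (\<forall>t \<ge> ta - \<tau>. T t \<le> M \<and> I t \<le> M \<and> V t \<le> M)"

lemma absorbed_exists: "\<exists>ta. absorbed ta"
proof -
  obtain t0 where "\<And>t. t \<ge> t0 \<Longrightarrow> T t \<le> M \<and> I t \<le> M \<and> V t \<le> M"
    using eventually_bounded unfolding eventually_at_top_linorder by blast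
  then have "absorbed (max 1 t0 + \<tau>)" by (simp add: absorbed_def)
  then show ?thesis ..
qed

lemma absorbedD:
  assumes "absorbed ta" "ta - \<tau> \<le> t"
  shows "0 < t" "T t \<le> M" "I t \<le> M" "V t \<le> M"
  using assms \<tau>_nonneg by (auto simp: absorbed_def)

lemma T_eventually_ge: "\<forall>\<^sub>F t in at_top. T t \<ge> \<eta>T"
proof -
  obtain ta where ta: "absorbed ta" using absorbed_exists by blast
  define G where "G = d + 2 * a * M / Tmax + b / \<alpha>"
  have "\<eta>T / (s / 2) \<ge> 0" using \<eta>T_pos s_pos by simp
  have "T t \<ge> \<eta>T" if "ta + \<eta>T / (s / 2) \<le> t" for t
  proof (rule ge_after_if_deriv_ge_pos_below[where x = T and x' = DT and u = ta and w = t
        and \<delta> = "s / 2" and B = 0])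
    fix r assume r: "ta < r" "r < t"
    have r_ge: "ta - \<tau> \<le> r" using r \<tau>_nonneg by simp
    show "(T has_real_derivative DT r) (at r)" using T_deriv absorbedD(1)[OF ta r_ge] by simp
    have "G > 0" using d_pos a_pos M_pos Tmax_pos b_pos \<alpha>_pos by (simp add: G_def add_pos_nonneg)
    assume "T r \<le> \<eta>T"
    then have "T r \<le> s / (2 * G)" by (simp add: \<eta>T_def G_def)
    then have "G * T r \<le> s / 2" using \<open>G > 0\<close> by (simp add: le_divide_eq algebra_simps)
    moreover have "incidence r \<le> b / \<alpha> * T r"
      using incidence_bounds(2)[of r] absorbedD(1)[OF ta r_ge] \<tau>_nonneg by simp
    moreover have "a * T r * (1 - (T r + I r) / Tmax) \<ge> - (2 * a * M / Tmax) * T r"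
      using solution_pos[of r] absorbedD[OF ta r_ge] \<tau>_nonneg
      by (intro logistic_term_ge_absorbed) auto
    moreover have "G * T r = d * T r + (2 * a * M / Tmax) * T r + b / \<alpha> * T r"
      by (simp add: G_def algebra_simps)
    ultimately show "DT r \<ge> s / 2" unfolding DT_def by linarith
  next
    show "ta \<le> t" using that \<open>\<eta>T / (s / 2) \<ge> 0\<close> by simp
  qed (use that s_pos solution_continuous_on[of ta t] solution_pos[of ta] ta \<tau>_nonneg
      in \<open>auto simp: absorbed_def\<close>)
  then show ?thesis unfolding eventually_at_top_linorder by blast
qed

end

lemma (in hiv_model) hiv_solutionI:
  "is_solution s d a Tmax b \<alpha> \<mu> p c \<tau> T I V \<Longrightarrow> hiv_solution s d a Tmax b \<alpha> \<mu> p c \<tau> T I V"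
  by (intro hiv_solution.intro hiv_model_axioms hiv_solution_axioms.intro)

section \<open>Persistence\<close>

locale endemic_model = hiv_model +
  assumes R0_gt_1: "R0_of s d a Tmax b \<mu> p c > 1"
begin

definition "\<Delta> = b * p * T0 / c + a * (1 - T0 / Tmax) - \<mu>"

lemma \<Delta>_pos: "\<Delta> > 0"
proof -
  have "(1 / \<mu>) * (b * p * T0 / c + a * (1 - T0 / Tmax)) > 1"
    using R0_gt_1 by (simp add: R0_of_def T0_def)
  then show ?thesis using \<mu>_pos by (simp add: \<Delta>_def field_simps)
qed

text \<open>
  For \<open>T \<le> T0\<close> and \<open>I, V \<le> \<theta> y\<close> the losses \<open>a T I / Tmax + incidence\<close> are then at most
  half of the gain \<open>y s / T0\<close> of \<open>infection_free_rhs\<close> below \<open>T0 - y\<close>.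
\<close>
definition "\<theta> = s / (2 * T0^2 * (a / Tmax + b))"

text \<open>
  A lower bound for the coefficient of \<open>I\<close> in \<open>W'\<close> while \<open>T \<in> [T0 - y, T0 + y]\<close> and
  \<open>I, V \<le> \<theta> y\<close>, with \<open>q\<close> chosen as below for \<open>\<xi> = y\<close>. At \<open>y = 0\<close> it equals
  \<open>\<Delta> = \<mu> (R0 - 1)\<close>.
\<close>
definition infection_margin :: "real \<Rightarrow> real" where
  "infection_margin y = a * (1 - (T0 + y + \<theta> * y) / Tmax) - \<mu>
     + p * ((1 - y) * b * (T0 - y) / (c * (1 + \<alpha> * (\<theta> * y))))"

lemma \<theta>_pos: "\<theta> > 0"
  using s_pos T0_pos a_pos Tmax_pos b_pos by (simp add: \<theta>_def add_pos_pos)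

lemma exists_small_margin:
  "\<exists>y. 0 < y \<and> y < 1/2 \<and> y < T0/2 \<and> infection_margin y > \<Delta>/2"
proof -
  have "isCont infection_margin 0"
    unfolding infection_margin_def using c_pos Tmax_pos by (intro continuous_intros) auto
  moreover have "infection_margin 0 = \<Delta>"
    using c_pos Tmax_pos by (simp add: infection_margin_def \<Delta>_def)
  ultimately have "\<forall>\<^sub>F y in at_right 0. \<Delta>/2 < infection_margin y"
    using \<Delta>_pos by (intro order_tendstoD(1)) (auto simp: isCont_def filterlim_at_split)
  moreover have "\<forall>\<^sub>F y in at_right (0::real). y < min (1/2) (T0/2)"
    using T0_pos unfolding eventually_at_right_field by (intro exI[of _ "min (1/2) (T0/2)"]) auto
  ultimately have "\<forall>\<^sub>F y in at_right 0. \<Delta>/2 < infection_margin y \<and> y < min (1/2) (T0/2)"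
    by (rule eventually_conj)
  then obtain e where "e > 0"
    and e: "\<And>y. 0 < y \<Longrightarrow> y < e \<Longrightarrow> \<Delta>/2 < infection_margin y \<and> y < min (1/2) (T0/2)"
    unfolding eventually_at_right_field by auto
  then show ?thesis using e[of "e/2"] by (intro exI[of _ "e/2"]) auto
qed

definition "\<xi> = (SOME y. 0 < y \<and> y < 1/2 \<and> y < T0/2 \<and> infection_margin y > \<Delta>/2)"

lemma \<xi>_props: "0 < \<xi>" "\<xi> < 1/2" "\<xi> < T0/2" "infection_margin \<xi> > \<Delta>/2"
  using someI_ex[OF exists_small_margin] unfolding \<xi>_def[symmetric] by auto

definition "\<epsilon> = \<theta> * \<xi>"
text \<open>
  \<open>q c\<close> is the fraction \<open>1 - \<xi>\<close> of the least incidence per virion near \<open>T0\<close>, so that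
  \<open>incidence - q c V \<ge> \<kappa>V V\<close> there.
\<close>
definition "q = (1 - \<xi>) * b * (T0 - \<xi>) / (c * (1 + \<alpha> * \<epsilon>))"
definition "\<kappa>V = \<xi> * b * (T0 - \<xi>) / (1 + \<alpha> * \<epsilon>)"
definition "\<delta>1 = \<xi> * s / (2 * T0)"
definition "\<delta>2 = a * \<xi> * T0 / Tmax"
text \<open>Time for \<open>T\<close> to enter \<open>[T0 - \<xi>, T0 + \<xi>]\<close> once \<open>I\<close> and \<open>V\<close> stay below \<open>\<epsilon>\<close>.\<close>
definition "L0 = max ((T0 - \<xi>) / \<delta>1) (max 0 ((M - (T0 + \<xi>)) / \<delta>2))"
definition "kdec = \<mu> + 2 * a * M / Tmax + c"
definition "C = q + b * M * \<tau> * exp (c * \<tau>)"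
definition "\<kappa> = min (\<Delta> / 2) (\<kappa>V / C)"
definition "\<epsilon>W = min \<epsilon> (q * \<epsilon>)"
definition "\<eta>W = \<epsilon>W * exp (- kdec * L0)"
definition "\<eta>V = min (\<eta>W / (2 * C)) (p * \<eta>W / (4 * c))"
definition "\<phi> = b * \<eta>T * \<eta>V / (1 + \<alpha> * M)"
definition "\<eta>I = \<phi> / (2 * (\<mu> + 2 * a * M / Tmax))"

lemma \<epsilon>_pos: "\<epsilon> > 0" and q_pos: "q > 0" and \<kappa>V_pos: "\<kappa>V > 0"
  and \<delta>1_pos: "\<delta>1 > 0" and \<delta>2_pos: "\<delta>2 > 0" and L0_nonneg: "L0 \<ge> 0"
  and kdec_pos: "kdec > 0" and C_pos: "C > 0" and \<kappa>_pos: "\<kappa> > 0"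
  and \<epsilon>W_pos: "\<epsilon>W > 0" and \<eta>W_pos: "\<eta>W > 0" and \<eta>V_pos: "\<eta>V > 0"
  and \<phi>_pos: "\<phi> > 0" and \<eta>I_pos: "\<eta>I > 0" and \<xi>_lt_T0: "T0 - \<xi> > 0"
proof -
  show \<epsilon>: "\<epsilon> > 0" using \<theta>_pos \<xi>_props by (simp add: \<epsilon>_def)
  show T0\<xi>: "T0 - \<xi> > 0" using \<xi>_props T0_pos by simp
  have "1 + \<alpha> * \<epsilon> > 0" using \<epsilon> \<alpha>_pos by (simp add: add_pos_pos)
  then show q: "q > 0" and \<kappa>V: "\<kappa>V > 0"
    using \<xi>_props T0\<xi> b_pos c_pos by (simp_all add: q_def \<kappa>V_def)
  show \<delta>1: "\<delta>1 > 0" using \<xi>_props s_pos T0_pos by (simp add: \<delta>1_def)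
  show "\<delta>2 > 0" using \<xi>_props a_pos T0_pos Tmax_pos by (simp add: \<delta>2_def)
  have "(T0 - \<xi>) / \<delta>1 > 0" using T0\<xi> \<delta>1 by simp
  then show "L0 \<ge> 0" by (simp add: L0_def)
  show kdec: "kdec > 0"
    using \<mu>_pos a_pos M_pos Tmax_pos c_pos by (simp add: kdec_def add_pos_nonneg)
  have "b * M * \<tau> * exp (c * \<tau>) \<ge> 0" using b_pos M_pos \<tau>_nonneg by simp
  then show C: "C > 0" using q by (simp add: C_def)
  show "\<kappa> > 0" using \<Delta>_pos \<kappa>V C by (simp add: \<kappa>_def)
  show \<epsilon>W: "\<epsilon>W > 0" using \<epsilon> q by (simp add: \<epsilon>W_def)
  then show \<eta>W: "\<eta>W > 0" by (simp add: \<eta>W_def)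
  then show \<eta>V: "\<eta>V > 0" using C p_pos c_pos by (simp add: \<eta>V_def)
  have "1 + \<alpha> * M > 0" using \<alpha>_pos M_pos by (simp add: add_pos_pos)
  then show \<phi>: "\<phi> > 0" using \<eta>T_pos \<eta>V b_pos by (simp add: \<phi>_def)
  have "\<mu> + 2 * a * M / Tmax > 0" using \<mu>_pos a_pos M_pos Tmax_pos by (simp add: add_pos_nonneg)
  then show "\<eta>I > 0" using \<phi> by (simp add: \<eta>I_def)
qed

lemma losses_near_T0_eq_\<delta>1: "a * T0 * \<epsilon> / Tmax + b * T0 * \<epsilon> = \<delta>1"
proof -
  define k where "k = a / Tmax + b"
  have "k > 0" using a_pos b_pos Tmax_pos by (simp add: k_def add_pos_pos)
  have "a * T0 * \<epsilon> / Tmax + b * T0 * \<epsilon> = k * T0 * \<epsilon>"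
    by (simp add: k_def algebra_simps)
  also have "\<dots> = k * T0 * (s / (2 * T0^2 * k) * \<xi>)"
    by (simp add: k_def \<epsilon>_def \<theta>_def)
  also have "\<dots> = \<delta>1"
    using \<open>k > 0\<close> T0_pos by (simp add: \<delta>1_def field_simps power2_eq_square)
  finally show ?thesis .
qed

lemmas constants_pos = \<epsilon>_pos q_pos \<kappa>V_pos \<delta>1_pos \<delta>2_pos L0_nonneg kdec_pos C_pos \<kappa>_pos
  \<epsilon>W_pos \<eta>W_pos \<eta>V_pos \<phi>_pos \<eta>I_pos \<xi>_lt_T0

end

locale endemic_solution = hiv_solution + endemic_model
begin

text \<open>
  The delay integral \<open>\<integral>\<^sub>t\<^sub>-\<^sub>\<tau>\<^sup>t incidence\<close> is written as a difference of integrals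
  from \<open>-\<tau>\<close>, which differentiates directly.
\<close>
definition "W t = I t + q * V t + (integral {-\<tau>..t} incidence - integral {-\<tau>..t - \<tau>} incidence)"
definition "DW t = incidence t + I t * (a * (1 - (T t + I t) / Tmax) - \<mu> + q * p) - q * c * V t"

lemma incidence_continuous_on: "continuous_on {-\<tau>..} incidence"
proof -
  have "continuous_on {-\<tau>..} T" "continuous_on {-\<tau>..} V"
    using solution by (auto simp: is_solution_def)
  moreover have "\<forall>t\<in>{-\<tau>..}. 1 + \<alpha> * V t \<noteq> 0"
    using solution_pos \<alpha>_pos by (smt (verit) atLeast_iff mult_pos_pos)
  ultimately show ?thesis
    unfolding incidence_def[abs_def] by (intro continuous_intros) auto
qed

lemma incidence_integrable_on: "-\<tau> \<le> u \<Longrightarrow> incidence integrable_on {u..v}"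
  by (rule integrable_continuous_real, rule continuous_on_subset[OF incidence_continuous_on]) auto

lemma W_eq: "0 \<le> t \<Longrightarrow> W t = I t + q * V t + integral {t - \<tau>..t} incidence"
  using Henstock_Kurzweil_Integration.integral_combine[where f = incidence and a = "-\<tau>"
      and c = "t - \<tau>" and b = t] incidence_integrable_on[of "-\<tau>" t] \<tau>_nonneg
  by (simp add: W_def)

lemma W_deriv:
  assumes "t > 0"
  shows "(W has_real_derivative DW t) (at t)"
proof -
  have "((\<lambda>u. integral {-\<tau>..u} incidence) has_real_derivative incidence t) (at t)"
    using assms \<tau>_nonneg by (intro integral_upper_has_real_derivative incidence_continuous_on) auto
  moreover have "((\<lambda>u. integral {-\<tau>..u} incidence) has_real_derivative incidence (t - \<tau>))
      (at (t + - \<tau>))"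
    using integral_upper_has_real_derivative[OF incidence_continuous_on, of "t - \<tau>"] assms by simp
  then have "((\<lambda>u. integral {-\<tau>..u - \<tau>} incidence) has_real_derivative incidence (t - \<tau>)) (at t)"
    unfolding DERIV_shift by simp
  ultimately have
    "(W has_real_derivative DI t + q * DV t + (incidence t - incidence (t - \<tau>))) (at t)"
    unfolding W_def[abs_def] using assms by (intro DERIV_add DERIV_cmult DERIV_diff I_deriv V_deriv)
  moreover have "DI t + q * DV t + (incidence t - incidence (t - \<tau>)) = DW t"
    by (simp add: DI_def DV_def DW_def algebra_simps)
  ultimately show ?thesis by simp
qed

lemma W_continuous_on: "0 < u \<Longrightarrow> continuous_on {u..v} W"
  by (intro continuous_at_imp_continuous_on ballI DERIV_isCont[OF W_deriv]) auto

lemma W_ge: "0 \<le> t \<Longrightarrow> I t + q * V t \<le> W t"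
  unfolding W_eq using incidence_integrable_on incidence_bounds(1) \<tau>_nonneg
  by (auto intro!: integral_nonneg)

lemma W_pos: "0 \<le> t \<Longrightarrow> W t > 0"
  using W_ge[of t] solution_pos[of t] constants_pos \<tau>_nonneg by (smt (verit) mult_pos_pos)

lemma small_if_W_le:
  assumes "0 \<le> t" "W t \<le> \<epsilon>W"
  shows "I t \<le> \<epsilon>" "V t \<le> \<epsilon>"
proof -
  have "I t + q * V t \<le> \<epsilon>W" using W_ge assms by (meson order_trans)
  moreover have "I t > 0" "q * V t > 0"
    using solution_pos[of t] assms \<tau>_nonneg constants_pos by auto
  ultimately have "I t \<le> \<epsilon>" "q * V t \<le> q * \<epsilon>" unfolding \<epsilon>W_def by auto
  then show "I t \<le> \<epsilon>" "V t \<le> \<epsilon>" using constants_pos by auto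
qed

lemma V_le_later:
  assumes "0 \<le> r" "r \<le> t"
  shows "V r \<le> V t * exp (c * (t - r))"
proof -
  have "V t \<ge> V r * exp (- c * (t - r))"
  proof (rule exp_lower_bound_if_deriv_ge[where x' = DV])
    fix u assume u: "r < u" "u < t"
    show "(V has_real_derivative DV u) (at u)" using V_deriv u assms by simp
    show "DV u \<ge> - c * V u" using solution_pos[of u] u assms \<tau>_nonneg p_pos by (simp add: DV_def)
  qed (use assms solution_continuous_on[of r t] \<tau>_nonneg in auto)
  then have "V r * exp (- c * (t - r)) * exp (c * (t - r)) \<le> V t * exp (c * (t - r))"
    by (simp add: mult_right_mono)
  then show ?thesis by (simp add: mult.assoc exp_add[symmetric])
qed

lemma delay_integral_le:
  assumes "absorbed ta" "ta \<le> t"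
  shows "integral {t - \<tau>..t} incidence \<le> b * M * \<tau> * exp (c * \<tau>) * V t"
proof -
  define K where "K = b * M * exp (c * \<tau>) * V t"
  have "integral {t - \<tau>..t} incidence \<le> integral {t - \<tau>..t} (\<lambda>_. K)"
  proof (rule integral_le)
    show "incidence integrable_on {t - \<tau>..t}"
      using incidence_integrable_on assms \<tau>_nonneg by (simp add: absorbed_def)
    fix r assume r: "r \<in> {t - \<tau>..t}"
    then have r_ge: "ta - \<tau> \<le> r" using assms by auto
    note r_pos = absorbedD(1)[OF assms(1) r_ge]
    have "incidence r \<le> b * T r * V r" using incidence_bounds(3)[of r] r_pos \<tau>_nonneg by simp
    also have "\<dots> \<le> b * M * V r"
      using absorbedD(2)[OF assms(1) r_ge] solution_pos[of r] r_pos \<tau>_nonneg b_pos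
      by (simp add: mult_right_mono)
    also have "\<dots> \<le> b * M * (V t * exp (c * (t - r)))"
      using V_le_later[of r t] r r_pos b_pos M_pos by (simp add: mult_left_mono)
    also have "\<dots> \<le> K"
      using r c_pos solution_pos[of t] r_pos b_pos M_pos \<tau>_nonneg
      by (simp add: K_def mult_left_mono)
    finally show "incidence r \<le> K" .
  qed (rule integrable_const_ivl)
  also have "\<dots> = b * M * \<tau> * exp (c * \<tau>) * V t" using \<tau>_nonneg by (simp add: K_def)
  finally show ?thesis .
qed

lemma W_le:
  assumes "absorbed ta" "ta \<le> t"
  shows "W t \<le> I t + C * V t"
  using W_eq[of t] delay_integral_le[OF assms] absorbedD(1)[OF assms(1), of t] assms \<tau>_nonneg
  by (simp add: C_def algebra_simps)

lemma DW_ge_decay: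
  assumes "absorbed ta" "ta \<le> t"
  shows "DW t \<ge> - kdec * W t"
proof -
  have t: "ta - \<tau> \<le> t" using assms \<tau>_nonneg by simp
  note bounds = absorbedD[OF assms(1) t]
  have pos: "T t > 0" "I t > 0" "V t > 0" using solution_pos[of t] bounds(1) \<tau>_nonneg by auto
  have "a * I t * (1 - (T t + I t) / Tmax) \<ge> - (2 * a * M / Tmax) * I t"
    using pos bounds by (intro logistic_term_ge_absorbed) auto
  moreover have "incidence t \<ge> 0" using incidence_bounds(1)[of t] bounds(1) \<tau>_nonneg by simp
  moreover have "q * p * I t \<ge> 0" "c * I t \<ge> 0" "c * (q * V t) \<le> kdec * (q * V t)"
    using pos constants_pos p_pos c_pos \<mu>_pos a_pos M_pos Tmax_pos
    by (auto intro!: mult_right_mono simp: kdec_def)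
  moreover have "kdec * (I t + q * V t) \<le> kdec * W t"
    using W_ge[of t] bounds(1) constants_pos by (intro mult_left_mono) auto
  moreover have
    "kdec * (I t + q * V t) = \<mu> * I t + (2 * a * M / Tmax) * I t + c * I t + kdec * (q * V t)"
    by (simp add: kdec_def distrib_left distrib_right)
  moreover have "DW t = incidence t + a * I t * (1 - (T t + I t) / Tmax) - \<mu> * I t + q * p * I t
      - c * (q * V t)"
    by (simp add: DW_def algebra_simps)
  ultimately show ?thesis by linarith
qed

lemma DW_ge_near_equilibrium:
  assumes "0 < t" "T0 - \<xi> \<le> T t" "T t \<le> T0 + \<xi>" "I t \<le> \<epsilon>" "V t \<le> \<epsilon>"
  shows "DW t \<ge> \<Delta> / 2 * I t + \<kappa>V * V t"
proof -
  have pos: "T t > 0" "I t > 0" "V t > 0" using solution_pos[of t] assms(1) \<tau>_nonneg by auto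
  have "(T t + I t) / Tmax \<le> (T0 + \<xi> + \<theta> * \<xi>) / Tmax"
    using assms Tmax_pos by (intro divide_right_mono) (auto simp: \<epsilon>_def)
  then have "a * (1 - (T0 + \<xi> + \<theta> * \<xi>) / Tmax) \<le> a * (1 - (T t + I t) / Tmax)"
    using a_pos by (intro mult_left_mono) auto
  moreover have "infection_margin \<xi> = a * (1 - (T0 + \<xi> + \<theta> * \<xi>) / Tmax) - \<mu> + q * p"
    by (simp add: infection_margin_def q_def \<epsilon>_def)
  ultimately have "\<Delta> / 2 \<le> a * (1 - (T t + I t) / Tmax) - \<mu> + q * p"
    using \<xi>_props(4) by linarith
  then have "I t * (\<Delta> / 2) \<le> I t * (a * (1 - (T t + I t) / Tmax) - \<mu> + q * p)"
    using pos by (intro mult_left_mono) auto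
  moreover have "b * (T0 - \<xi>) * V t / (1 + \<alpha> * \<epsilon>) \<le> incidence t"
    unfolding incidence_def using assms pos constants_pos b_pos \<alpha>_pos
    by (intro incidence_mono) auto
  moreover have "1 + \<alpha> * \<epsilon> \<noteq> 0" using \<alpha>_pos \<epsilon>_pos by (smt (verit) mult_pos_pos)
  then have "b * (T0 - \<xi>) * V t / (1 + \<alpha> * \<epsilon>) - q * c * V t = \<kappa>V * V t"
    using c_pos by (simp add: q_def \<kappa>V_def divide_simps) (simp add: algebra_simps)
  ultimately show ?thesis unfolding DW_def by (simp add: algebra_simps)
qed

lemma DW_ge_growth:
  assumes "absorbed ta" "ta \<le> t"
    and "T0 - \<xi> \<le> T t" "T t \<le> T0 + \<xi>" "I t \<le> \<epsilon>" "V t \<le> \<epsilon>"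
  shows "DW t \<ge> \<kappa> * W t"
proof -
  have t: "0 < t" using absorbedD(1)[OF assms(1)] assms(2) \<tau>_nonneg by simp
  have pos: "I t > 0" "V t > 0" using solution_pos[of t] t \<tau>_nonneg by auto
  have "\<kappa> \<le> \<Delta> / 2" "\<kappa> \<le> \<kappa>V / C" unfolding \<kappa>_def by (rule min.cobounded1, rule min.cobounded2)
  then have "\<kappa> * I t \<le> \<Delta> / 2 * I t" "\<kappa> * C * V t \<le> \<kappa>V * V t"
    using pos C_pos by (simp_all add: mult_right_mono le_divide_eq)
  moreover have "\<kappa> * W t \<le> \<kappa> * (I t + C * V t)"
    using W_le[OF assms(1,2)] \<kappa>_pos by (simp add: mult_left_mono)
  moreover have "\<kappa> * (I t + C * V t) = \<kappa> * I t + \<kappa> * C * V t" by (simp add: algebra_simps)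
  ultimately show ?thesis using DW_ge_near_equilibrium[OF t assms(3-6)] by linarith
qed

lemma T_ge_near_T0_if_small:
  assumes "absorbed ta" "ta \<le> u" "u + L0 \<le> w"
    and small: "\<And>r. u < r \<Longrightarrow> r < w \<Longrightarrow> I r \<le> \<epsilon> \<and> V r \<le> \<epsilon>"
  shows "T0 - \<xi> \<le> T w"
proof -
  have u: "0 < u" using absorbedD(1)[OF assms(1)] assms(2) \<tau>_nonneg by simp
  have "u + (T0 - \<xi> - 0) / \<delta>1 \<le> w" using assms(3) by (simp add: L0_def)
  then show ?thesis
  proof (rule ge_after_if_deriv_ge_pos_below[where x = T and x' = DT and \<delta> = \<delta>1, rotated -1])
    fix r assume r: "u < r" "r < w"
    show "(T has_real_derivative DT r) (at r)" using T_deriv r u by simp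
    assume T_le: "T r \<le> T0 - \<xi>"
    have pos: "T r > 0" "I r > 0" "V r > 0" using solution_pos[of r] r u \<tau>_nonneg by auto
    have "infection_free_rhs (T r) \<ge> \<xi> * s / T0"
      using infection_free_rhs_ge[of \<xi> "T r"] T_le pos \<xi>_props by simp
    moreover have "T r * I r \<le> T0 * \<epsilon>" "T r * V r \<le> T0 * \<epsilon>"
      using T_le small[OF r] pos \<xi>_props by (auto intro!: mult_mono)
    then have "a * T r * I r / Tmax \<le> a * T0 * \<epsilon> / Tmax" "b * T r * V r \<le> b * T0 * \<epsilon>"
      using a_pos Tmax_pos b_pos by (simp_all add: mult.assoc divide_right_mono mult_left_mono)
    moreover have "incidence r \<le> b * T r * V r"
      using incidence_bounds(3)[of r] r u \<tau>_nonneg by simp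
    moreover note losses_near_T0_eq_\<delta>1
    moreover have "\<xi> * s / T0 = 2 * \<delta>1" by (simp add: \<delta>1_def)
    ultimately show "DT r \<ge> \<delta>1" unfolding DT_eq by linarith
  next
    show "0 \<le> T u" using solution_pos[of u] u \<tau>_nonneg by simp
    show "u \<le> w" using assms(3) L0_nonneg by simp
    then show "continuous_on {u..w} T" using solution_continuous_on[of u w] u \<tau>_nonneg by simp
  qed (rule \<delta>1_pos)
qed

lemma T_le_near_T0:
  assumes "absorbed ta" "ta \<le> u" "u + L0 \<le> w"
  shows "T w \<le> T0 + \<xi>"
proof -
  have u: "0 < u" "T u \<le> M" using absorbedD[OF assms(1), of u] assms(2) \<tau>_nonneg by auto
  have "u + (M - (T0 + \<xi>)) / \<delta>2 \<le> w" using assms(3) by (simp add: L0_def)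
  then show ?thesis
  proof (rule le_after_if_deriv_le_neg_above[where x = T and x' = DT and \<delta> = \<delta>2, rotated -1])
    fix r assume r: "u < r" "r < w"
    show "(T has_real_derivative DT r) (at r)" using T_deriv r u by simp
    assume "T0 + \<xi> \<le> T r"
    then have "infection_free_rhs (T r) \<le> - (a / Tmax) * \<xi> * T0"
      using \<xi>_props by (intro infection_free_rhs_le) auto
    then show "DT r \<le> - \<delta>2" using DT_le[of r] r u by (simp add: \<delta>2_def)
  next
    show "u \<le> w" using assms(3) L0_nonneg by simp
    then show "continuous_on {u..w} T" using solution_continuous_on[of u w] u \<tau>_nonneg by simp
  qed (use u \<delta>2_pos in auto)
qed

lemma W_exp_growth_while_small:
  assumes "absorbed ta" "ta \<le> z" "z + L0 \<le> u" "u \<le> v"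
    and small: "\<And>r. z < r \<Longrightarrow> r < v \<Longrightarrow> W r < \<epsilon>W"
  shows "W v \<ge> W u * exp (\<kappa> * (v - u))"
proof (rule exp_lower_bound_if_deriv_ge[where x' = DW, OF assms(4)])
  have z: "0 < z" using absorbedD(1)[OF assms(1)] assms(2) \<tau>_nonneg by simp
  have IV_small: "I r \<le> \<epsilon> \<and> V r \<le> \<epsilon>" if "z < r" "r < v" for r
    using small_if_W_le[of r] small[OF that] that z by auto
  show "continuous_on {u..v} W" using W_continuous_on z assms(3) L0_nonneg by simp
  fix r assume r: "u < r" "r < v"
  show "(W has_real_derivative DW r) (at r)" using W_deriv r z assms(3) L0_nonneg by simp
  have "z + L0 \<le> r" using r assms(3) by simp
  then have "T0 - \<xi> \<le> T r" "T r \<le> T0 + \<xi>"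
    using T_ge_near_T0_if_small[OF assms(1,2), of r] T_le_near_T0[OF assms(1,2), of r] IV_small r
    by auto
  then show "DW r \<ge> \<kappa> * W r"
    using DW_ge_growth[OF assms(1)] IV_small[of r] r assms(2,3) L0_nonneg by simp
qed

lemma W_exp_decay_bound:
  assumes "absorbed ta" "ta \<le> z" "z \<le> w"
  shows "W w \<ge> W z * exp (- kdec * (w - z))"
proof (rule exp_lower_bound_if_deriv_ge[where x' = DW, OF assms(3)])
  have z: "0 < z" using absorbedD(1)[OF assms(1)] assms(2) \<tau>_nonneg by simp
  show "continuous_on {z..w} W" using W_continuous_on z by simp
  fix r assume r: "z < r" "r < w"
  show "(W has_real_derivative DW r) (at r)" using W_deriv r z by simp
  show "DW r \<ge> - kdec * W r" using DW_ge_decay[OF assms(1)] r assms(2) by simp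
qed

lemma W_reaches_threshold:
  assumes "absorbed ta" "ta \<le> t0"
  shows "\<exists>t1\<ge>t0. W t1 \<ge> \<epsilon>W"
proof (rule ccontr)
  assume "\<not> ?thesis"
  then have small: "\<And>t. t0 \<le> t \<Longrightarrow> W t < \<epsilon>W" by force
  have t0: "0 < t0" using absorbedD(1)[OF assms(1)] assms(2) \<tau>_nonneg by simp
  define u where "u = t0 + L0"
  define v where "v = u + ln (\<epsilon>W / W u) / \<kappa>"
  have "t0 \<le> u" using L0_nonneg by (simp add: u_def)
  then have Wu: "0 < W u" "W u < \<epsilon>W" using W_pos[of u] small[of u] t0 by auto
  then have "u \<le> v" using \<kappa>_pos by (simp add: v_def)
  have "W u * exp (\<kappa> * (v - u)) \<le> W v"
    using W_exp_growth_while_small[OF assms, of u v] small \<open>u \<le> v\<close> by (simp add: u_def)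
  moreover have "W u * exp (\<kappa> * (v - u)) = \<epsilon>W"
    using Wu \<kappa>_pos \<epsilon>W_pos by (simp add: v_def)
  ultimately show False using small[of v] \<open>t0 \<le> u\<close> \<open>u \<le> v\<close> by simp
qed

lemma W_stays_above:
  assumes "absorbed ta" "ta \<le> t1" "W t1 \<ge> \<epsilon>W" "t1 \<le> t2"
  shows "W t2 \<ge> \<eta>W"
proof -
  have t1: "0 < t1" using absorbedD(1)[OF assms(1)] assms(2) \<tau>_nonneg by simp
  have "continuous_on {t1..t2} (\<lambda>t. - W t)"
    using W_continuous_on[OF t1] by (intro continuous_intros)
  then obtain z where z: "t1 \<le> z" "z \<le> t2" "W z \<ge> \<epsilon>W"
    and small: "\<And>t. z < t \<Longrightarrow> t \<le> t2 \<Longrightarrow> W t < \<epsilon>W"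
    using last_time_le[of t1 t2 "\<lambda>t. - W t" "- \<epsilon>W"] assms(3,4) by auto
  have "ta \<le> z" using z assms(2) by simp
  have decayed: "W w \<ge> \<eta>W" if "z \<le> w" "w \<le> z + L0" for w
  proof -
    have "\<epsilon>W * exp (- kdec * L0) \<le> W z * exp (- kdec * (w - z))"
      using that z kdec_pos \<epsilon>W_pos by (intro mult_mono) auto
    then show ?thesis using W_exp_decay_bound[OF assms(1) \<open>ta \<le> z\<close> that(1)] by (simp add: \<eta>W_def)
  qed
  show ?thesis
  proof (cases "t2 \<le> z + L0")
    case True
    then show ?thesis using decayed z by simp
  next
    case False
    have "W (z + L0) * 1 \<le> W (z + L0) * exp (\<kappa> * (t2 - (z + L0)))"
      using W_pos[of "z + L0"] t1 z False L0_nonneg \<kappa>_pos by (intro mult_left_mono) auto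
    also have "\<dots> \<le> W t2"
      using W_exp_growth_while_small[OF assms(1) \<open>ta \<le> z\<close>, of "z + L0" t2] small False by simp
    finally show ?thesis using decayed[of "z + L0"] L0_nonneg by simp
  qed
qed

lemma W_eventually_ge: "\<forall>\<^sub>F t in at_top. W t \<ge> \<eta>W"
proof -
  obtain ta where ta: "absorbed ta" using absorbed_exists by blast
  obtain t1 where "t1 \<ge> ta" "W t1 \<ge> \<epsilon>W" using W_reaches_threshold[OF ta order_refl] by blast
  then show ?thesis
    unfolding eventually_at_top_linorder using W_stays_above[OF ta] by blast
qed

lemma V_eventually_ge: "\<forall>\<^sub>F t in at_top. V t \<ge> \<eta>V"
proof -
  obtain ta where ta: "absorbed ta" using absorbed_exists by blast
  obtain tW where tW: "\<And>t. t \<ge> tW \<Longrightarrow> W t \<ge> \<eta>W"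
    using W_eventually_ge unfolding eventually_at_top_linorder by blast
  define u where "u = max ta tW"
  define \<delta> where "\<delta> = p * \<eta>W / 4"
  have u: "0 < u" using absorbedD(1)[OF ta, of ta] \<tau>_nonneg by (simp add: u_def)
  have "\<delta> > 0" using p_pos constants_pos by (simp add: \<delta>_def)
  then have "0 \<le> \<eta>V / \<delta>" using constants_pos by simp
  have "V t \<ge> \<eta>V" if "u + (\<eta>V - 0) / \<delta> \<le> t" for t
  proof (rule ge_after_if_deriv_ge_pos_below[where x = V and x' = DV and u = u and w = t
        and \<delta> = \<delta> and B = 0])
    fix r assume r: "u < r" "r < t"
    show "(V has_real_derivative DV r) (at r)" using V_deriv r u by simp
    assume V_le: "V r \<le> \<eta>V"
    have "V r \<le> \<eta>W / (2 * C)" "V r \<le> p * \<eta>W / (4 * c)" using V_le by (auto simp: \<eta>V_def)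
    then have "C * V r \<le> \<eta>W / 2" "c * V r \<le> \<delta>"
      using constants_pos c_pos by (simp_all add: le_divide_eq \<delta>_def mult.commute mult.left_commute)
    moreover have "\<eta>W \<le> I r + C * V r"
      using tW[of r] W_le[OF ta, of r] r by (simp add: u_def)
    ultimately have "p * (\<eta>W / 2) \<le> p * I r" "c * V r \<le> \<delta>" using p_pos by simp_all
    then show "DV r \<ge> \<delta>" by (simp add: DV_def \<delta>_def)
  next
    show "u \<le> t" using that \<open>0 \<le> \<eta>V / \<delta>\<close> by simp
  qed (use that \<open>\<delta> > 0\<close> constants_pos solution_continuous_on[of u t] solution_pos[of u] u \<tau>_nonneg
      in auto)
  then show ?thesis unfolding eventually_at_top_linorder by blast
qed

lemma I_eventually_ge: "\<forall>\<^sub>F t in at_top. I t \<ge> \<eta>I"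
proof -
  obtain ta where ta: "absorbed ta" using absorbed_exists by blast
  obtain tT tV where tT: "\<And>t. t \<ge> tT \<Longrightarrow> T t \<ge> \<eta>T" and tV: "\<And>t. t \<ge> tV \<Longrightarrow> V t \<ge> \<eta>V"
    using T_eventually_ge V_eventually_ge unfolding eventually_at_top_linorder by metis
  define u where "u = max ta (max tT tV) + \<tau>"
  define k where "k = \<mu> + 2 * a * M / Tmax"
  have u: "0 < u" using absorbedD(1)[OF ta, of ta] \<tau>_nonneg by (simp add: u_def)
  have "k > 0" using \<mu>_pos a_pos M_pos Tmax_pos by (simp add: k_def add_pos_nonneg)
  have "0 \<le> \<eta>I / (\<phi> / 2)" using constants_pos by simp
  have "I t \<ge> \<eta>I" if "u + (\<eta>I - 0) / (\<phi> / 2) \<le> t" for t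
  proof (rule ge_after_if_deriv_ge_pos_below[where x = I and x' = DI and u = u and w = t
        and \<delta> = "\<phi> / 2" and B = 0])
    fix r assume r: "u < r" "r < t"
    show "(I has_real_derivative DI r) (at r)" using I_deriv r u by simp
    assume I_le: "I r \<le> \<eta>I"
    have delayed: "ta - \<tau> \<le> r - \<tau>" "tT \<le> r - \<tau>" "tV \<le> r - \<tau>" "ta - \<tau> \<le> r"
      using r \<tau>_nonneg by (auto simp: u_def)
    have "\<phi> \<le> incidence (r - \<tau>)"
      unfolding \<phi>_def incidence_def
      using tT[OF delayed(2)] tV[OF delayed(3)] absorbedD(4)[OF ta delayed(1)]
        \<eta>T_pos constants_pos b_pos \<alpha>_pos
      by (intro incidence_mono) auto
    moreover have "a * I r * (1 - (T r + I r) / Tmax) \<ge> - (2 * a * M / Tmax) * I r"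
      using solution_pos[of r] absorbedD[OF ta delayed(4)] \<tau>_nonneg
      by (intro logistic_term_ge_absorbed) auto
    moreover have "I r \<le> \<phi> / (2 * k)" using I_le by (simp add: \<eta>I_def k_def)
    then have "k * I r \<le> k * (\<phi> / (2 * k))" using \<open>k > 0\<close> by (intro mult_left_mono) auto
    then have "k * I r \<le> \<phi> / 2" using \<open>k > 0\<close> by simp
    moreover have "k * I r = \<mu> * I r + (2 * a * M / Tmax) * I r" by (simp add: k_def algebra_simps)
    ultimately show "DI r \<ge> \<phi> / 2" unfolding DI_def by linarith
  next
    show "u \<le> t" using that \<open>0 \<le> \<eta>I / (\<phi> / 2)\<close> by simp
  qed (use that constants_pos solution_continuous_on[of u t] solution_pos[of u] u \<tau>_nonneg
      in auto)
  then show ?thesis unfolding eventually_at_top_linorder by blast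
qed

end

lemma (in endemic_model) endemic_solutionI:
  "is_solution s d a Tmax b \<alpha> \<mu> p c \<tau> T I V \<Longrightarrow> endemic_solution s d a Tmax b \<alpha> \<mu> p c \<tau> T I V"
  by (intro endemic_solution.intro hiv_solutionI endemic_model_axioms)

theorem theorem7:
  fixes s d a Tmax b \<alpha> \<mu> p c \<tau> :: real
  assumes "s > 0" "d > 0" "a > 0" "Tmax > 0" "b > 0" "\<alpha> > 0" "\<mu> > 0" "p > 0" "c > 0"
    and "d \<le> \<mu>" and "\<tau> \<ge> 0"
    and "R0_of s d a Tmax b \<mu> p c > 1"
  shows "permanent s d a Tmax b \<alpha> \<mu> p c \<tau>"
proof -
  interpret endemic_model s d a Tmax b \<alpha> \<mu> p c \<tau>
    by unfold_locales (use assms in auto)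
  define \<eta> where "\<eta> = min \<eta>T (min \<eta>I \<eta>V)"
  have "\<eta> > 0" using \<eta>T_pos constants_pos by (simp add: \<eta>_def)
  have "(\<forall>\<^sub>F t in at_top. T t \<le> M \<and> I t \<le> M \<and> V t \<le> M) \<and>
      (\<forall>\<^sub>F t in at_top. \<eta> \<le> T t) \<and> (\<forall>\<^sub>F t in at_top. \<eta> \<le> I t) \<and> (\<forall>\<^sub>F t in at_top. \<eta> \<le> V t)"
    if "is_solution s d a Tmax b \<alpha> \<mu> p c \<tau> T I V" for T I V
  proof -
    interpret endemic_solution s d a Tmax b \<alpha> \<mu> p c \<tau> T I V
      using that by (rule endemic_solutionI)
    show ?thesis using eventually_bounded T_eventually_ge I_eventually_ge V_eventually_ge
      by (auto simp: \<eta>_def elim: eventually_mono)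
  qed
  then show ?thesis unfolding permanent_def using \<open>\<eta> > 0\<close>
    by (intro conjI exI[of _ M] exI[of _ \<eta>]) (auto intro: Liminf_ereal_ge_if_eventually_ge)
qed

end
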